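(* Let $N\geq 3$, $p>1$, $m\in\mathbb N$ and $\alpha_p:=\max\left\{0,\frac{p(N-2)-(N+2)}{2}\right\}$. For $\alpha>\alpha_p$ let $u_\alpha$ be the unique radial solution of $-\Delta u=|x|^\alpha|u|^{p-1}u$ in $B^N$, $u=0$ on $\partial B^N$, with exactly $m$ nodal sets and $u_\alpha(0)>0$. Then there exists a constant $C>0$, not depending on $\alpha$, such that $$\|u_\alpha\|_\infty\geq C\left(\frac{\alpha+N}{N}\right)^{\frac{2}{p-1}}\quad\forall\alpha>\alpha_p.$$
   Context: $B^N$ is the open unit ball in $\mathbb R^N$ centered at the origin. A nodal set is a connected component of the set where the function does not vanish. *)

theory Defs
  imports "HOL-Analysis.Analysis"
begin

definition alpha_p :: "real \<Rightarrow> real \<Rightarrow> real" where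
  "alpha_p N p = max 0 ((p * (N - 2) - (N + 2)) / 2)"

definition henon_classical_solution ::
  "real \<Rightarrow> real \<Rightarrow> ('a::euclidean_space \<Rightarrow> real) \<Rightarrow> bool" where
  "henon_classical_solution a p u \<longleftrightarrow>
     continuous_on (cball 0 1) u \<and>
     (\<forall>x\<in>sphere 0 1. u x = 0) \<and>
     (\<exists>Du D2. (\<forall>x\<in>ball 0 1. (u has_derivative (\<lambda>h. Du x \<bullet> h)) (at x)) \<and>
              (\<forall>x\<in>ball 0 1. (Du has_derivative D2 x) (at x)) \<and>
              (\<forall>i\<in>Basis. \<forall>j\<in>Basis. continuous_on (ball 0 1) (\<lambda>x. D2 x i \<bullet> j)) \<and>
              (\<forall>x\<in>ball 0 1.
                 - (\<Sum>i\<in>Basis. D2 x i \<bullet> i) = norm x powr a * (\<bar>u x\<bar> powr (p - 1) * u x)))"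

definition radial_on_ball :: "('a::euclidean_space \<Rightarrow> real) \<Rightarrow> bool" where
  "radial_on_ball u \<longleftrightarrow> (\<forall>x\<in>cball 0 1. \<forall>y\<in>cball 0 1. norm x = norm y \<longrightarrow> u x = u y)"

definition nodal_sets :: "('a::euclidean_space \<Rightarrow> real) \<Rightarrow> 'a set set" where
  "nodal_sets u = components {x \<in> ball 0 1. u x \<noteq> 0}"

end

theory Submission
  imports Defs
begin

text \<open>Let \<open>M = max \<bar>u\<bar>\<close> and \<open>K = M\<^sup>p / ((\<alpha> + 2)(\<alpha> + N))\<close>. Since
  \<open>\<Delta> \<bar>x\<bar>\<^bsup>\<alpha>+2\<^esup> = (\<alpha> + 2)(\<alpha> + N) \<bar>x\<bar>\<^sup>\<alpha>\<close> and \<open>-\<Delta>(\<plusminus>u) \<le> \<bar>x\<bar>\<^sup>\<alpha> M\<^sup>p\<close>, the function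
  \<open>\<plusminus>u + K \<bar>x\<bar>\<^bsup>\<alpha>+2\<^esup> + \<epsilon> \<bar>x\<bar>\<^sup>2\<close> is strictly subharmonic, so it attains its maximum on the
  boundary sphere, where it equals \<open>K + \<epsilon>\<close>. Hence \<open>M \<le> K\<close>, i.e.
  \<open>M\<^bsup>p-1\<^esup> \<ge> (\<alpha> + 2)(\<alpha> + N) \<ge> ((\<alpha> + N)/N)\<^sup>2\<close>, and the theorem holds with \<open>C = 1\<close>.\<close>

lemma second_derivative_nonpos_at_local_max:
  fixes g g' :: "real \<Rightarrow> real"
  assumes d: "d > 0"
    and g': "\<And>t. \<bar>t\<bar> < d \<Longrightarrow> (g has_real_derivative g' t) (at t)"
    and g'': "(g' has_real_derivative L) (at 0)"
    and max: "\<And>t. \<bar>t\<bar> < d \<Longrightarrow> g t \<le> g 0"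
  shows "L \<le> 0"
proof (rule ccontr)
  assume "\<not> L \<le> 0"
  then have "L > 0" by simp
  have critical: "g' 0 = 0"
    by (rule DERIV_local_max[OF g'[of 0] d]) (use d max in auto)
  obtain e where e: "e > 0" "\<And>h. 0 < h \<Longrightarrow> h < e \<Longrightarrow> g' 0 < g' (0 + h)"
    using DERIV_pos_inc_right[OF g'' \<open>L > 0\<close>] by blast
  define h where "h = min e d / 2"
  have h: "0 < h" "h < e" "h < d"
    using e d by (auto simp: h_def)
  have "g 0 < g h"
  proof (rule DERIV_pos_imp_increasing_open[OF h(1)])
    fix t assume "0 < t" "t < h"
    then show "\<exists>y. DERIV g t :> y \<and> y > 0"
      using g'[of t] e(2)[of t] h critical by auto
  next
    have "isCont g t" if "t \<in> {0..h}" for t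
      using g'[of t] that h by (intro DERIV_isCont) auto
    then show "continuous_on {0..h} g"
      by (simp add: continuous_at_imp_continuous_on)
  qed
  with max[of h] h show False by simp
qed

lemma has_real_derivative_along_line:
  fixes f :: "'a::real_normed_vector \<Rightarrow> real"
  assumes "(f has_derivative f') (at (y + t *\<^sub>R v))"
  shows "((\<lambda>s. f (y + s *\<^sub>R v)) has_real_derivative f' v) (at t)"
proof -
  have "((\<lambda>s. y + s *\<^sub>R v) has_derivative (\<lambda>s. s *\<^sub>R v)) (at t)"
    by (auto intro!: derivative_eq_intros)
  from has_derivative_compose[OF this assms]
  have "((\<lambda>s. f (y + s *\<^sub>R v)) has_derivative (\<lambda>s. f' (s *\<^sub>R v))) (at t)" .
  moreover have "f' (s *\<^sub>R v) = f' v * s" for s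
    using linear_scale[OF has_derivative_linear[OF assms]] by simp
  ultimately show ?thesis
    by (simp add: has_field_derivative_def)
qed

lemma directional_second_derivative_nonpos_at_max:
  fixes f :: "'a::real_inner \<Rightarrow> real"
  assumes d: "d > 0"
    and f': "\<And>t. \<bar>t\<bar> < d \<Longrightarrow> (f has_derivative (\<lambda>h. Df (y + t *\<^sub>R v) \<bullet> h)) (at (y + t *\<^sub>R v))"
    and f'': "(Df has_derivative D2) (at y)"
    and g': "\<And>t. \<bar>t\<bar> < d \<Longrightarrow> (g has_real_derivative g' t) (at t)"
    and g'': "(g' has_real_derivative P) (at 0)"
    and max: "\<And>t. \<bar>t\<bar> < d \<Longrightarrow> f (y + t *\<^sub>R v) + g t \<le> f y + g 0"
  shows "D2 v \<bullet> v + P \<le> 0"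
proof (rule second_derivative_nonpos_at_local_max[OF d])
  fix t :: real assume t: "\<bar>t\<bar> < d"
  show "((\<lambda>t. f (y + t *\<^sub>R v) + g t) has_real_derivative Df (y + t *\<^sub>R v) \<bullet> v + g' t) (at t)"
    using has_real_derivative_along_line[OF f'[OF t]] g'[OF t] by (rule DERIV_add)
  show "f (y + t *\<^sub>R v) + g t \<le> f (y + 0 *\<^sub>R v) + g 0"
    using max[OF t] by simp
next
  have "((\<lambda>x. Df x \<bullet> v) has_derivative (\<lambda>h. D2 h \<bullet> v)) (at (y + 0 *\<^sub>R v))"
    using f'' by (auto intro!: derivative_eq_intros)
  from has_real_derivative_along_line[OF this] g''
  show "((\<lambda>t. Df (y + t *\<^sub>R v) \<bullet> v + g' t) has_real_derivative D2 v \<bullet> v + P) (at 0)"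
    by (rule DERIV_add)
qed

lemma norm_powr_line_lower_barrier:
  fixes y v :: "'a::real_inner" and b :: real
  assumes v: "norm v = 1"
  obtains d \<psi> \<psi>' where "d > 0"
    and "\<And>t. \<bar>t\<bar> < d \<Longrightarrow> (\<psi> has_real_derivative \<psi>' t) (at t)"
    and "(\<psi>' has_real_derivative
           b * (b - 2) * norm y powr (b - 4) * (y \<bullet> v)\<^sup>2 + b * norm y powr (b - 2)) (at 0)"
    and "\<And>t. \<bar>t\<bar> < d \<Longrightarrow> \<psi> t \<le> norm (y + t *\<^sub>R v) powr b"
    and "\<psi> 0 = norm y powr b"
proof (cases "y = 0")
  case True
  \<comment> \<open>The claimed second derivative is \<open>0\<close> here (as \<open>0 powr _ = 0\<close>), and the zero function
    touches \<open>\<bar>t\<bar> powr b\<close> from below; no differentiability of \<open>\<bar>t\<bar> powr b\<close> is needed.\<close>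
  show ?thesis
    by (rule that[of 1 "\<lambda>_. 0" "\<lambda>_. 0"]) (use True in auto)
next
  case False
  define q where "q t = norm y ^ 2 + 2 * t * (y \<bullet> v) + t\<^sup>2" for t
  have norm_sq: "norm (y + t *\<^sub>R v) ^ 2 = q t" for t
    using v unfolding q_def power2_norm_eq_inner norm_eq_1
    by (simp add: inner_add_left inner_add_right inner_commute[of v y] power2_eq_square algebra_simps)
  have q_pos: "q t > 0" if "\<bar>t\<bar> < norm y" for t
  proof -
    have "norm y - \<bar>t\<bar> \<le> norm (y + t *\<^sub>R v)"
      using norm_triangle_ineq2[of y "- (t *\<^sub>R v)"] v by simp
    with that have "norm (y + t *\<^sub>R v) > 0" by linarith
    then show ?thesis by (metis norm_sq zero_less_power)
  qed
  have q': "(q has_real_derivative 2 * (y \<bullet> v) + 2 * t) (at t)" for t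
    unfolding q_def by (auto intro!: derivative_eq_intros)
  show ?thesis
  proof (rule that[of "norm y" "\<lambda>t. q t powr (b / 2)" "\<lambda>t. b / 2 * q t powr (b / 2 - 1) * (2 * (y \<bullet> v) + 2 * t)"])
    show "norm y > 0" using False by simp
    fix t :: real assume t: "\<bar>t\<bar> < norm y"
    show "((\<lambda>t. q t powr (b / 2)) has_real_derivative b / 2 * q t powr (b / 2 - 1) * (2 * (y \<bullet> v) + 2 * t)) (at t)"
      using DERIV_fun_powr[OF q' q_pos[OF t], of "b / 2"] by simp
    have "q t powr (b / 2) = norm (y + t *\<^sub>R v) powr b"
      unfolding norm_sq[symmetric] by (simp add: powr_powr flip: powr_numeral)
    then show "q t powr (b / 2) \<le> norm (y + t *\<^sub>R v) powr b" by simp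
  next
    show "q 0 powr (b / 2) = norm y powr b"
      unfolding q_def by (simp add: powr_powr flip: powr_numeral)
  next
    have "q 0 > 0" using False by (simp add: q_def)
    from DERIV_fun_powr[OF q' this, of "b / 2 - 1"]
    have "((\<lambda>t. q t powr (b / 2 - 1)) has_real_derivative
            (b / 2 - 1) * norm y powr (b - 4) * (2 * (y \<bullet> v))) (at 0)"
      by (simp add: q_def powr_powr algebra_simps flip: powr_numeral)
    moreover have "((\<lambda>t. 2 * (y \<bullet> v) + 2 * t) has_real_derivative 2) (at 0)"
      by (auto intro!: derivative_eq_intros)
    ultimately have "((\<lambda>t. b / 2 * q t powr (b / 2 - 1) * (2 * (y \<bullet> v) + 2 * t)) has_real_derivative
        b / 2 * ((b / 2 - 1) * norm y powr (b - 4) * (2 * (y \<bullet> v))) * (2 * (y \<bullet> v) + 2 * 0)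
        + 2 * (b / 2 * q 0 powr (b / 2 - 1))) (at 0)"
      by (rule DERIV_mult[OF DERIV_cmult])
    moreover have "q 0 powr (b / 2 - 1) = norm y powr (b - 2)"
      by (simp add: q_def powr_powr algebra_simps flip: powr_numeral)
    ultimately show "((\<lambda>t. b / 2 * q t powr (b / 2 - 1) * (2 * (y \<bullet> v) + 2 * t)) has_real_derivative
        b * (b - 2) * norm y powr (b - 4) * (y \<bullet> v)\<^sup>2 + b * norm y powr (b - 2)) (at 0)"
      by (simp add: power2_eq_square algebra_simps)
  qed
qed

lemma sum_Basis_norm_powr_second_derivatives:
  fixes y :: "'a::euclidean_space"
  shows "(\<Sum>i\<in>Basis. b * (b - 2) * norm y powr (b - 4) * (y \<bullet> i)\<^sup>2 + b * norm y powr (b - 2))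
       = b * (b - 2 + DIM('a)) * norm y powr (b - 2)"
proof (cases "y = 0")
  case False
  have "(\<Sum>i\<in>Basis. (y \<bullet> i)\<^sup>2) = norm y ^ 2"
    unfolding power2_norm_eq_inner euclidean_inner[of y y] by (simp add: power2_eq_square)
  moreover have "norm y powr (b - 4) * norm y ^ 2 = norm y powr (b - 2)"
    using False by (simp add: powr_add[symmetric] flip: powr_numeral)
  ultimately have "(\<Sum>i\<in>Basis. b * (b - 2) * norm y powr (b - 4) * (y \<bullet> i)\<^sup>2)
      = b * (b - 2) * norm y powr (b - 2)"
    by (simp add: sum_distrib_left[symmetric] mult.assoc)
  then show ?thesis
    unfolding sum.distrib by (simp add: algebra_simps)
qed simp

lemma laplacian_plus_norm_powr_nonpos_at_max:
  fixes f :: "'a::euclidean_space \<Rightarrow> real"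
  assumes S: "open S" "y \<in> S"
    and f': "\<And>x. x \<in> S \<Longrightarrow> (f has_derivative (\<lambda>h. Df x \<bullet> h)) (at x)"
    and f'': "(Df has_derivative D2) (at y)"
    and K: "K \<ge> 0"
    and max: "\<And>x. x \<in> S \<Longrightarrow> f x + K * norm x powr b \<le> f y + K * norm y powr b"
  shows "(\<Sum>i\<in>Basis. D2 i \<bullet> i) + K * (b * (b - 2 + DIM('a)) * norm y powr (b - 2)) \<le> 0"
proof -
  obtain r where r: "r > 0" "ball y r \<subseteq> S"
    using S openE by blast
  have along_axis: "D2 i \<bullet> i + K * (b * (b - 2) * norm y powr (b - 4) * (y \<bullet> i)\<^sup>2 + b * norm y powr (b - 2)) \<le> 0"
    if i: "i \<in> Basis" for i
  proof -
    obtain d \<psi> \<psi>' where d: "d > 0"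
      and \<psi>': "\<And>t. \<bar>t\<bar> < d \<Longrightarrow> (\<psi> has_real_derivative \<psi>' t) (at t)"
      and \<psi>'': "(\<psi>' has_real_derivative
                 b * (b - 2) * norm y powr (b - 4) * (y \<bullet> i)\<^sup>2 + b * norm y powr (b - 2)) (at 0)"
      and below: "\<And>t. \<bar>t\<bar> < d \<Longrightarrow> \<psi> t \<le> norm (y + t *\<^sub>R i) powr b"
      and touch: "\<psi> 0 = norm y powr b"
      using norm_powr_line_lower_barrier[where y=y and v=i and b=b] i by auto
    have in_S: "y + t *\<^sub>R i \<in> S" if "\<bar>t\<bar> < min d r" for t
      using r that i by (auto simp: dist_norm)
    show ?thesis
    proof (rule directional_second_derivative_nonpos_at_max[of "min d r"])
      fix t :: real assume t: "\<bar>t\<bar> < min d r"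
      show "(f has_derivative (\<lambda>h. Df (y + t *\<^sub>R i) \<bullet> h)) (at (y + t *\<^sub>R i))"
        using f' in_S[OF t] .
      show "((\<lambda>t. K * \<psi> t) has_real_derivative K * \<psi>' t) (at t)"
        using \<psi>' t by (auto intro: DERIV_cmult)
      have "f (y + t *\<^sub>R i) + K * \<psi> t \<le> f (y + t *\<^sub>R i) + K * norm (y + t *\<^sub>R i) powr b"
        using below t K by (simp add: mult_left_mono)
      also have "\<dots> \<le> f y + K * \<psi> 0"
        using max[OF in_S[OF t]] touch by simp
      finally show "f (y + t *\<^sub>R i) + K * \<psi> t \<le> f y + K * \<psi> 0" .
    qed (use d r f'' \<psi>'' in \<open>auto intro: DERIV_cmult\<close>)
  qed
  have "(\<Sum>i\<in>Basis. D2 i \<bullet> i)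
        + K * (\<Sum>i\<in>Basis. b * (b - 2) * norm y powr (b - 4) * (y \<bullet> i)\<^sup>2 + b * norm y powr (b - 2))
      = (\<Sum>i\<in>Basis. D2 i \<bullet> i + K * (b * (b - 2) * norm y powr (b - 4) * (y \<bullet> i)\<^sup>2 + b * norm y powr (b - 2)))"
    by (simp only: sum_distrib_left sum.distrib[symmetric])
  also have "\<dots> \<le> 0"
    using along_axis by (rule sum_nonpos)
  finally show ?thesis
    unfolding sum_Basis_norm_powr_second_derivatives .
qed

lemma abs_le_SUP_ball_if_vanishing_on_sphere:
  fixes u :: "'a::euclidean_space \<Rightarrow> real"
  assumes cont: "continuous_on (cball 0 1) u"
    and zero: "\<forall>z\<in>sphere 0 1. u z = 0"
    and x: "x \<in> cball 0 1"
  shows "\<bar>u x\<bar> \<le> (SUP z\<in>ball 0 1. \<bar>u z\<bar>)"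
proof -
  have "continuous_on (cball 0 1) (\<lambda>z. \<bar>u z\<bar>)"
    using cont by (intro continuous_intros)
  then obtain z0 where z0: "z0 \<in> cball 0 1" and max: "\<forall>z\<in>cball 0 1. \<bar>u z\<bar> \<le> \<bar>u z0\<bar>"
    using continuous_attains_sup[of "cball (0::'a) 1"] by force
  have bdd: "bdd_above ((\<lambda>z. \<bar>u z\<bar>) ` ball 0 1)"
    using max by (intro bdd_aboveI[of _ "\<bar>u z0\<bar>"]) auto
  have "\<bar>u z0\<bar> \<le> (SUP z\<in>ball 0 1. \<bar>u z\<bar>)"
  proof (cases "z0 \<in> ball 0 1")
    case True
    then show ?thesis by (rule cSUP_upper[OF _ bdd])
  next
    case False
    with z0 zero have "\<bar>u z0\<bar> = 0" by auto
    also have "\<dots> \<le> \<bar>u 0\<bar>" by simp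
    also have "\<dots> \<le> (SUP z\<in>ball 0 1. \<bar>u z\<bar>)"
      by (rule cSUP_upper[OF _ bdd]) simp
    finally show ?thesis .
  qed
  with max x show ?thesis by force
qed

lemma mult_abs_powr_le_powr:
  fixes \<sigma> s M p :: real
  assumes \<sigma>: "\<bar>\<sigma>\<bar> \<le> 1" and s: "\<bar>s\<bar> \<le> M" and p: "p \<ge> 0"
  shows "\<sigma> * (\<bar>s\<bar> powr (p - 1) * s) \<le> M powr p"
proof -
  have "\<sigma> * s \<le> \<bar>\<sigma>\<bar> * \<bar>s\<bar>"
    by (metis abs_ge_self abs_mult)
  also have "\<dots> \<le> \<bar>s\<bar>"
    using \<sigma> by (intro mult_left_le_one_le) auto
  finally have "\<sigma> * (\<bar>s\<bar> powr (p - 1) * s) \<le> \<bar>s\<bar> powr (p - 1) * \<bar>s\<bar>"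
    using mult_left_mono[of "\<sigma> * s" "\<bar>s\<bar>" "\<bar>s\<bar> powr (p - 1)"] by (simp add: mult.left_commute)
  also have "\<dots> = \<bar>s\<bar> powr p"
    using powr_mult_base[of "\<bar>s\<bar>" "p - 1"] by (simp add: mult.commute)
  also have "\<dots> \<le> M powr p"
    using s p by (intro powr_mono2) auto
  finally show ?thesis .
qed

lemma henon_comparison_max_on_sphere:
  fixes u :: "'a::euclidean_space \<Rightarrow> real"
  assumes a: "a \<ge> 0" and p: "p \<ge> 0"
    and u: "henon_classical_solution a p u"
    and M: "\<And>z. z \<in> cball 0 1 \<Longrightarrow> \<bar>u z\<bar> \<le> M"
    and \<sigma>: "\<bar>\<sigma>\<bar> \<le> 1" and e: "e > 0"
  defines "K \<equiv> M powr p / ((a + 2) * (a + DIM('a)))"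
  assumes y: "y \<in> cball 0 1"
    and max: "\<And>z. z \<in> cball 0 1 \<Longrightarrow> \<sigma> * u z + e * (z \<bullet> z) + K * norm z powr (a + 2)
                                     \<le> \<sigma> * u y + e * (y \<bullet> y) + K * norm y powr (a + 2)"
  shows "norm y = 1"
proof (rule ccontr)
  assume "norm y \<noteq> 1"
  with y have y: "y \<in> ball 0 1" by auto
  from u obtain Du D2
    where du: "\<forall>z\<in>ball 0 1. (u has_derivative (\<lambda>h. Du z \<bullet> h)) (at z)"
      and d2: "\<forall>z\<in>ball 0 1. (Du has_derivative D2 z) (at z)"
      and pde: "\<forall>z\<in>ball 0 1. - (\<Sum>i\<in>Basis. D2 z i \<bullet> i) = norm z powr a * (\<bar>u z\<bar> powr (p - 1) * u z)"
    unfolding henon_classical_solution_def by blast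
  define N where "N = real DIM('a)"
  have N: "N \<ge> 1"
    by (simp add: N_def DIM_positive Suc_le_eq)
  have K: "K \<ge> 0" and KM: "K * ((a + 2) * (a + N)) = M powr p"
    using a N by (simp_all add: K_def flip: N_def)
  have "(\<Sum>i\<in>Basis. (\<sigma> *\<^sub>R D2 y i + (2 * e) *\<^sub>R i) \<bullet> i)
      + K * ((a + 2) * (a + 2 - 2 + N) * norm y powr (a + 2 - 2)) \<le> 0"
    unfolding N_def
  proof (rule laplacian_plus_norm_powr_nonpos_at_max[OF open_ball y _ _ K])
    fix z :: 'a assume z: "z \<in> ball 0 1"
    show "((\<lambda>z. \<sigma> * u z + e * (z \<bullet> z)) has_derivative (\<lambda>h. (\<sigma> *\<^sub>R Du z + (2 * e) *\<^sub>R z) \<bullet> h)) (at z)"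
      using du z by (auto intro!: derivative_eq_intros simp: inner_add_left inner_commute algebra_simps)
    show "\<sigma> * u z + e * (z \<bullet> z) + K * norm z powr (a + 2) \<le> \<sigma> * u y + e * (y \<bullet> y) + K * norm y powr (a + 2)"
      using max z by simp
  next
    show "((\<lambda>z. \<sigma> *\<^sub>R Du z + (2 * e) *\<^sub>R z) has_derivative (\<lambda>h. \<sigma> *\<^sub>R D2 y h + (2 * e) *\<^sub>R h)) (at y)"
      using d2 y by (auto intro!: derivative_eq_intros)
  qed
  then have laplacian: "\<sigma> * (\<Sum>i\<in>Basis. D2 y i \<bullet> i) + 2 * e * N + M powr p * norm y powr a \<le> 0"
    by (simp add: inner_add_left sum.distrib sum_distrib_left N_def algebra_simps flip: KM)
  have "(\<Sum>i\<in>Basis. D2 y i \<bullet> i) = - (norm y powr a * (\<bar>u y\<bar> powr (p - 1) * u y))"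
    using pde y by force
  then have "\<sigma> * (\<Sum>i\<in>Basis. D2 y i \<bullet> i) = - (norm y powr a * (\<sigma> * (\<bar>u y\<bar> powr (p - 1) * u y)))"
    by (simp add: algebra_simps)
  also have "\<dots> \<ge> - (norm y powr a * M powr p)"
    using mult_abs_powr_le_powr[OF \<sigma> M p] y by (simp add: mult_left_mono)
  finally have "- (M powr p * norm y powr a) \<le> \<sigma> * (\<Sum>i\<in>Basis. D2 y i \<bullet> i)"
    by (simp add: mult.commute)
  moreover have "2 * e * N > 0"
    using e N by simp
  ultimately show False
    using laplacian by linarith
qed

lemma henon_solution_abs_le_powr_bound:
  fixes u :: "'a::euclidean_space \<Rightarrow> real"
  assumes a: "a \<ge> 0" and p: "p \<ge> 0"
    and u: "henon_classical_solution a p u"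
    and M: "\<And>z. z \<in> cball 0 1 \<Longrightarrow> \<bar>u z\<bar> \<le> M"
    and x: "x \<in> cball 0 1"
  shows "\<bar>u x\<bar> \<le> M powr p / ((a + 2) * (a + DIM('a)))"
proof (rule field_le_epsilon)
  fix e :: real assume e: "e > 0"
  define K where "K = M powr p / ((a + 2) * (a + DIM('a)))"
  have K: "K \<ge> 0"
    using a by (simp add: K_def)
  define \<sigma> where "\<sigma> = sgn (u x)"
  have \<sigma>: "\<bar>\<sigma>\<bar> \<le> 1" "\<sigma> * u x = \<bar>u x\<bar>"
    by (simp_all add: \<sigma>_def sgn_if)
  define w where "w z = \<sigma> * u z + e * (z \<bullet> z) + K * norm z powr (a + 2)" for z :: 'a
  have "continuous_on (cball 0 1) w"
    using u a unfolding w_def henon_classical_solution_def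
    by (intro continuous_intros continuous_on_powr') auto
  then obtain y where y: "y \<in> cball 0 1" and max: "\<forall>z\<in>cball 0 1. w z \<le> w y"
    using continuous_attains_sup[of "cball (0::'a) 1" w] by force
  have "norm y = 1"
    using henon_comparison_max_on_sphere[OF a p u M \<sigma>(1) e y] max unfolding w_def K_def by blast
  then have "w y = K + e"
    using u by (simp add: w_def dot_square_norm henon_classical_solution_def)
  moreover have "\<bar>u x\<bar> \<le> w x"
    using \<sigma>(2) e K by (simp add: w_def)
  ultimately show "\<bar>u x\<bar> \<le> K + e"
    using max x by fastforce
qed

lemma powr_le_of_le_powr_div:
  fixes M D p :: real
  assumes M: "M > 0" and p: "p > 1" and D: "D > 0" and le: "M \<le> M powr p / D"
  shows "D powr (1 / (p - 1)) \<le> M"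
proof -
  have "D * M \<le> M powr (p - 1) * M"
    using le D M by (simp add: field_simps powr_mult_base)
  then have "D \<le> M powr (p - 1)"
    using M by simp
  then have "D powr (1 / (p - 1)) \<le> (M powr (p - 1)) powr (1 / (p - 1))"
    using D p by (intro powr_mono2) auto
  also have "\<dots> = M"
    using M p by (simp add: powr_powr)
  finally show ?thesis .
qed

lemma power2_ratio_le_mult:
  fixes a N :: real
  assumes a: "a \<ge> 0" and N: "N \<ge> 1"
  shows "((a + N) / N)\<^sup>2 \<le> (a + 2) * (a + N)"
proof -
  have "(a + N) / N = a / N + 1"
    using N by (simp add: field_simps)
  also have "a / N \<le> a"
    using a N by (simp add: divide_le_eq mult_le_cancel_left1)
  finally have "(a + N) / N \<le> a + 1" by simp
  then show ?thesis
    unfolding power2_eq_square using a N by (intro mult_mono) auto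
qed

theorem lemma3p1:
  fixes p :: real and m :: nat
  assumes "CARD('n::finite) \<ge> 3" and "p > 1"
  shows "\<exists>C>0. \<forall>(a::real) (u :: real^'n \<Rightarrow> real).
           a > alpha_p (real CARD('n)) p \<longrightarrow>
           henon_classical_solution a p u \<longrightarrow> radial_on_ball u \<longrightarrow>
           finite (nodal_sets u) \<longrightarrow> card (nodal_sets u) = m \<longrightarrow> u 0 > 0 \<longrightarrow>
           (SUP x\<in>ball 0 1. \<bar>u x\<bar>) \<ge>
             C * ((a + real CARD('n)) / real CARD('n)) powr (2 / (p - 1))"
proof (intro exI[of _ 1] conjI allI impI)
  fix a :: real and u :: "real^'n \<Rightarrow> real"
  assume "a > alpha_p (real CARD('n)) p" and u: "henon_classical_solution a p u" and "u 0 > 0"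
  define N where "N = real CARD('n)"
  define M where "M = (SUP x\<in>ball 0 1. \<bar>u x\<bar>)"
  have a: "a \<ge> 0" and N: "N \<ge> 1"
    using \<open>a > alpha_p (real CARD('n)) p\<close> assms(1) by (auto simp: alpha_p_def N_def)
  have bound: "\<bar>u x\<bar> \<le> M" if "x \<in> cball 0 1" for x
    using u that abs_le_SUP_ball_if_vanishing_on_sphere[of u x]
    unfolding henon_classical_solution_def M_def by blast
  from bound[of 0] \<open>u 0 > 0\<close> have "M > 0"
    by simp
  have "(SUP x\<in>ball 0 1. \<bar>u x\<bar>) \<le> M powr p / ((a + 2) * (a + N))"
    using henon_solution_abs_le_powr_bound[OF a _ u bound] \<open>p > 1\<close>
    by (intro cSUP_least) (auto simp: N_def)
  then have "M \<le> M powr p / ((a + 2) * (a + N))"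
    by (simp add: M_def)
  have "((a + N) / N) powr (2 / (p - 1)) = (((a + N) / N)\<^sup>2) powr (1 / (p - 1))"
    using a N by (simp add: powr_powr flip: powr_numeral)
  also have "\<dots> \<le> ((a + 2) * (a + N)) powr (1 / (p - 1))"
    using power2_ratio_le_mult[OF a N] \<open>p > 1\<close> by (intro powr_mono2) auto
  also have "\<dots> \<le> M"
    using \<open>M \<le> M powr p / ((a + 2) * (a + N))\<close> \<open>M > 0\<close> \<open>p > 1\<close> a N
    by (intro powr_le_of_le_powr_div) auto
  finally show "1 * ((a + real CARD('n)) / real CARD('n)) powr (2 / (p - 1)) \<le> (SUP x\<in>ball 0 1. \<bar>u x\<bar>)"
    by (simp add: M_def N_def)
qed simp

end
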